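(* Let $A,B,C$ be finite nonempty subsets of $\mathbb R$, let $f:\mathbb R\to\mathbb R$ be strictly convex, and suppose $|A+B|\le M|B|$. Then for every $\tau>0$, $$|\{x\in f(A)+C: (f(A)*C)(x)\ge\tau\}|\le c\,(M\log(2M))^2\frac{|B||C|^2}{\tau^3},$$ where $c>0$ is an absolute constant.
   Context: $f(A)=\{f(a):a\in A\}$; $(f(A)*C)(x)=|\{(u,v)\in f(A)\times C: u+v=x\}|$. Logarithms are to base 2. *)

theory Defs
  imports "HOL-Analysis.Analysis"
begin

definition strictly_convex :: "(real \<Rightarrow> real) \<Rightarrow> bool" where
  "strictly_convex f \<longleftrightarrow>
     (\<forall>x y t. x \<noteq> y \<and> 0 < t \<and> t < 1 \<longrightarrow>
        f ((1 - t) * x + t * y) < (1 - t) * f x + t * f y)"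

definition sumset :: "real set \<Rightarrow> real set \<Rightarrow> real set" where
  "sumset A B = {a + b | a b. a \<in> A \<and> b \<in> B}"

definition rep :: "real set \<Rightarrow> real set \<Rightarrow> real \<Rightarrow> nat" where
  "rep A C x = card {(u, v). u \<in> A \<and> v \<in> C \<and> u + v = x}"

end

theory Submission
  imports Defs
begin

text \<open>
  Let \<open>E\<close> be the set of \<open>\<tau>\<close>-popular sums and suppose first that \<open>f\<close> is increasing on \<open>A\<close>;
  put \<open>S = A + B\<close> and \<open>\<delta> = 8 / \<tau>\<close>. For \<open>x \<in> E\<close> and \<open>b \<in> B\<close> the fibre
  \<open>{a \<in> A. x - f a \<in> C}\<close> has at least \<open>\<tau>\<close> elements. Ranking \<open>a + b\<close> in \<open>S\<close> and \<open>x - f a\<close>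
  in \<open>C\<close>, a pigeonhole argument on the normalised sum of the two ranks yields at least
  \<open>\<tau> / 2\<close> pairs \<open>a < a'\<close> of the fibre whose rank gaps are below \<open>\<delta>|S|\<close> resp. \<open>\<delta>|C|\<close>.
  By strict convexity the increment \<open>f (y + d) - f y\<close> is strictly increasing in \<open>y\<close>, so
  \<open>(x, b, a, a') \<mapsto> (a + b, a' + b, x - f a', x - f a)\<close> is injective; its image consists of
  rank-close pairs of \<open>S\<close> and of \<open>C\<close>, of which there are at most \<open>\<delta>|S|\<^sup>2\<close> and \<open>\<delta>|C|\<^sup>2\<close>.
  Hence \<open>|E||B|\<tau>/2 \<le> 64|S|\<^sup>2|C|\<^sup>2/\<tau>\<^sup>2\<close>. A general strictly convex \<open>f\<close> is increasing on
  one part of \<open>A\<close> and decreasing on the other, and the decreasing part is reflected to the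
  increasing case.
\<close>

lemma strictly_convex_chord:
  assumes sc: "strictly_convex f" and pq: "p < q" and qr: "q < r"
  shows "f q * (r - p) < (r - q) * f p + (q - p) * f r"
proof -
  define t where "t = (q - p) / (r - p)"
  have rp: "r - p > 0" using pq qr by simp
  have t: "0 < t" "t < 1" using pq qr by (auto simp: t_def field_simps)
  have "(1 - t) * p + t * r = p + t * (r - p)" by (simp add: algebra_simps)
  hence q: "(1 - t) * p + t * r = q" using rp by (simp add: t_def)
  have "f q < (1 - t) * f p + t * f r"
    using sc t pq qr unfolding strictly_convex_def q[symmetric] by auto
  hence "f q * (r - p) < ((1 - t) * f p + t * f r) * (r - p)"
    using rp by (simp add: mult_strict_right_mono)
  also have "\<dots> = ((r - p) - t * (r - p)) * f p + t * (r - p) * f r"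
    by (simp add: algebra_simps)
  also have "\<dots> = (r - q) * f p + (q - p) * f r"
    using rp by (simp add: t_def)
  finally show ?thesis .
qed

lemma strictly_convex_increment_less:
  assumes sc: "strictly_convex f" and "0 < d" and "y < z"
  shows "f (y + d) - f y < f (z + d) - f z"
proof -
  have "f (y + d) * (z + d - y) < (z - y) * f y + d * f (z + d)"
    using strictly_convex_chord[OF sc, of y "y + d" "z + d"] assms by simp
  moreover have "f z * (z + d - y) < d * f y + (z - y) * f (z + d)"
    using strictly_convex_chord[OF sc, of y z "z + d"] assms by simp
  ultimately have "(f (y + d) + f z) * (z + d - y) < (f y + f (z + d)) * (z + d - y)"
    by (simp add: algebra_simps)
  hence "f (y + d) + f z < f y + f (z + d)"
    using assms by (simp add: mult_less_cancel_right)
  thus ?thesis by simp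
qed

lemma strictly_convex_translate_eq:
  assumes sc: "strictly_convex f" and "a1 < a1'"
    and "a1 + b1 = a2 + b2" "a1' + b1 = a2' + b2" "f a1' - f a1 = f a2' - f a2"
  shows "b1 = b2"
proof (rule ccontr)
  assume "b1 \<noteq> b2"
  hence "a1 \<noteq> a2" using assms(3) by auto
  have a2': "a2' = a2 + (a1' - a1)" using assms(3,4) by simp
  from \<open>a1 \<noteq> a2\<close> show False
    using strictly_convex_increment_less[OF sc, of "a1' - a1" a1 a2]
      strictly_convex_increment_less[OF sc, of "a1' - a1" a2 a1] assms(2,5)
    unfolding a2' by (auto simp: neq_iff)
qed

lemma strictly_convex_reflect:
  assumes "strictly_convex f"
  shows "strictly_convex (\<lambda>t. f (- t))"
  unfolding strictly_convex_def
proof (intro allI impI)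
  fix x y t :: real assume xyt: "x \<noteq> y \<and> 0 < t \<and> t < 1"
  have chord: "\<And>u v. u \<noteq> v \<Longrightarrow> f ((1 - t) * u + t * v) < (1 - t) * f u + t * f v"
    using assms xyt unfolding strictly_convex_def by blast
  have "f ((1 - t) * - x + t * - y) < (1 - t) * f (- x) + t * f (- y)"
    using chord[of "- x" "- y"] xyt by simp
  moreover have "(1 - t) * - x + t * - y = - ((1 - t) * x + t * y)" by (simp add: algebra_simps)
  ultimately show "f (- ((1 - t) * x + t * y)) < (1 - t) * f (- x) + t * f (- y)"
    by simp
qed

lemma strictly_convex_split_monotone:
  fixes A :: "real set"
  assumes sc: "strictly_convex f"
  defines "A1 \<equiv> {a \<in> A. \<forall>y>a. f a < f y}"
  shows "strict_mono_on A1 f" and "strict_antimono_on (A - A1) f"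
proof -
  show "strict_mono_on A1 f" unfolding A1_def by (rule strict_mono_onI) auto
  show "strict_antimono_on (A - A1) f"
  proof (rule monotone_onI)
    fix a a' assume a: "a \<in> A - A1" and a': "a' \<in> A - A1" and "a < a'"
    obtain y where "a' < y" "f y \<le> f a'" using a' unfolding A1_def by auto
    have "f a' * (y - a) < (y - a') * f a + (a' - a) * f y"
      using strictly_convex_chord[OF sc \<open>a < a'\<close> \<open>a' < y\<close>] .
    also have "\<dots> \<le> (y - a') * f a + (a' - a) * f a'"
      using \<open>f y \<le> f a'\<close> \<open>a < a'\<close> by (intro add_left_mono mult_left_mono) auto
    finally have "f a' * (y - a') < (y - a') * f a" by (simp add: algebra_simps)
    thus "f a' < f a" using \<open>a' < y\<close> by (simp add: mult.commute)
  qed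
qed

lemma sumset_eq_image: "sumset A B = (\<lambda>(a, b). a + b) ` (A \<times> B)"
  unfolding sumset_def by auto

lemma finite_sumset: "finite A \<Longrightarrow> finite B \<Longrightarrow> finite (sumset A B)"
  unfolding sumset_eq_image by simp

lemma card_sumset_le: "finite A \<Longrightarrow> finite B \<Longrightarrow> card (sumset A B) \<le> card A * card B"
  unfolding sumset_eq_image by (metis card_cartesian_product card_image_le finite_SigmaI)

lemma card_le_card_sumset:
  assumes "finite A" "finite B" "a \<in> A"
  shows "card B \<le> card (sumset A B)"
proof -
  have "(\<lambda>b. a + b) ` B \<subseteq> sumset A B" unfolding sumset_def using assms(3) by auto
  hence "card ((\<lambda>b. a + b) ` B) \<le> card (sumset A B)"
    using assms by (intro card_mono finite_sumset) auto
  thus ?thesis by (simp add: card_image)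
qed

lemma sumset_mono: "A \<subseteq> A' \<Longrightarrow> sumset A B \<subseteq> sumset A' B"
  unfolding sumset_def by auto

lemma sumset_uminus: "sumset (uminus ` A) (uminus ` B) = uminus ` sumset A B"
proof -
  have "uminus ` A \<times> uminus ` B = (\<lambda>(a, b). (- a, - b)) ` (A \<times> B)" by auto
  thus ?thesis unfolding sumset_eq_image by (simp add: image_image case_prod_unfold)
qed

lemma rep_eq_card_fibre:
  assumes "inj_on f A"
  shows "rep (f ` A) C x = card {a \<in> A. x - f a \<in> C}"
proof -
  have "{(u, v). u \<in> f ` A \<and> v \<in> C \<and> u + v = x} = (\<lambda>a. (f a, x - f a)) ` {a \<in> A. x - f a \<in> C}"
    by force
  moreover have "inj_on (\<lambda>a. (f a, x - f a)) {a \<in> A. x - f a \<in> C}"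
    using assms unfolding inj_on_def by auto
  ultimately show ?thesis unfolding rep_def by (simp add: card_image)
qed

lemma rep_Un_le: "rep (X \<union> Y) C x \<le> rep X C x + rep Y C x"
proof -
  have pairs: "{(u, v). u \<in> X \<union> Y \<and> v \<in> C \<and> u + v = x}
      = {(u, v). u \<in> X \<and> v \<in> C \<and> u + v = x} \<union> {(u, v). u \<in> Y \<and> v \<in> C \<and> u + v = x}"
    by auto
  show ?thesis unfolding rep_def pairs by (rule card_Un_le)
qed

lemma rep_pos_imp_mem_sumset:
  assumes "0 < rep X C x"
  shows "x \<in> sumset X C"
proof -
  have "{(u, v). u \<in> X \<and> v \<in> C \<and> u + v = x} \<noteq> {}"
    using assms unfolding rep_def by (metis card.empty less_irrefl)
  thus ?thesis unfolding sumset_def by blast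
qed

definition popular :: "real set \<Rightarrow> real set \<Rightarrow> real \<Rightarrow> real set" where
  "popular X C \<tau> = {x \<in> sumset X C. \<tau> \<le> real (rep X C x)}"

lemma popular_Un_subset:
  assumes "0 < \<tau>"
  shows "popular (X \<union> Y) C \<tau> \<subseteq> popular X C (\<tau> / 2) \<union> popular Y C (\<tau> / 2)"
proof
  fix x assume "x \<in> popular (X \<union> Y) C \<tau>"
  hence "\<tau> \<le> real (rep (X \<union> Y) C x)" by (simp add: popular_def)
  hence "\<tau> \<le> real (rep X C x) + real (rep Y C x)"
    using rep_Un_le[of X Y C x] by linarith
  hence "\<tau> / 2 \<le> real (rep X C x) \<or> \<tau> / 2 \<le> real (rep Y C x)" by linarith
  thus "x \<in> popular X C (\<tau> / 2) \<union> popular Y C (\<tau> / 2)"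
    unfolding popular_def using assms by (auto intro: rep_pos_imp_mem_sumset)
qed

lemma card_popular_le_card_mult: "finite X \<Longrightarrow> finite C \<Longrightarrow> card (popular X C \<tau>) \<le> card X * card C"
  unfolding popular_def
  by (rule le_trans[OF card_mono card_sumset_le]) (auto intro: finite_sumset)

definition rank :: "real set \<Rightarrow> real \<Rightarrow> nat" where
  "rank X s = card {y \<in> X. y < s}"

lemma rank_less:
  assumes "finite X" "s \<in> X" "s < s'"
  shows "rank X s < rank X s'"
proof -
  have "{y \<in> X. y < s} \<subset> {y \<in> X. y < s'}" using assms by auto
  thus ?thesis unfolding rank_def using assms by (simp add: psubset_card_mono)
qed

lemma rank_less_card:
  assumes "finite X" "s \<in> X"
  shows "rank X s < card X"
proof -
  have "{y \<in> X. y < s} \<subset> X" using assms by auto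
  thus ?thesis unfolding rank_def using assms by (simp add: psubset_card_mono)
qed

lemma strict_mono_on_rank: "finite X \<Longrightarrow> strict_mono_on X (rank X)"
  by (rule strict_mono_onI) (rule rank_less)

definition rank_close :: "real set \<Rightarrow> real \<Rightarrow> real \<Rightarrow> real \<Rightarrow> bool" where
  "rank_close X w s s' \<longleftrightarrow> s \<in> X \<and> s' \<in> X \<and> s < s' \<and> real (rank X s') < real (rank X s) + w"

lemma card_rank_close_le:
  assumes "finite X" "0 \<le> w"
  shows "real (card {s'. rank_close X w s s'}) \<le> w"
proof -
  let ?r = "rank X s"
  have "rank X ` {s'. rank_close X w s s'} \<subseteq> {?r <.. ?r + nat \<lfloor>w\<rfloor>}"
  proof
    fix k assume "k \<in> rank X ` {s'. rank_close X w s s'}"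
    then obtain s' where k: "k = rank X s'" and close: "rank_close X w s s'" by auto
    have "?r < k" using close rank_less[OF assms(1)] unfolding k rank_close_def by auto
    moreover have "real k - real ?r \<le> w" using close unfolding k rank_close_def by simp
    hence "int k - int ?r \<le> \<lfloor>w\<rfloor>" by (simp add: le_floor_iff)
    ultimately show "k \<in> {?r <.. ?r + nat \<lfloor>w\<rfloor>}" by auto
  qed
  moreover have "inj_on (rank X) {s'. rank_close X w s s'}"
    using strict_mono_on_imp_inj_on[OF strict_mono_on_rank[OF assms(1)]]
    by (rule inj_on_subset) (auto simp: rank_close_def)
  ultimately have "card {s'. rank_close X w s s'} \<le> nat \<lfloor>w\<rfloor>"
    using card_inj_on_le[of "rank X"] by (metis card_greaterThanAtMost diff_add_inverse finite_greaterThanAtMost)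
  moreover have "real (nat \<lfloor>w\<rfloor>) \<le> w" using assms(2) by simp
  ultimately show ?thesis by linarith
qed

lemma card_rank_close_pairs_le:
  assumes "finite X" "0 \<le> w"
  shows "real (card {(s, s'). rank_close X w s s'}) \<le> real (card X) * w"
proof -
  have pairs: "{(s, s'). rank_close X w s s'} = (SIGMA s:X. {s'. rank_close X w s s'})"
    by (auto simp: rank_close_def)
  have "finite {s'. rank_close X w s s'}" for s
    using assms(1) by (rule finite_subset[rotated]) (auto simp: rank_close_def)
  hence "real (card {(s, s'). rank_close X w s s'}) = (\<Sum>s\<in>X. real (card {s'. rank_close X w s s'}))"
    unfolding pairs using assms(1) by simp
  also have "\<dots> \<le> (\<Sum>s\<in>X. w)"
    by (rule sum_mono) (rule card_rank_close_le[OF assms])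
  finally show ?thesis by simp
qed

lemma card_le_card_close_pairs:
  fixes \<phi> :: "'a::linorder \<Rightarrow> real"
  assumes "finite R" and range: "\<phi> ` R \<subseteq> {0..<N}" and "0 < D" "0 \<le> N"
  shows "real (card R) \<le> real (card {(a, a'). a \<in> R \<and> a' \<in> R \<and> a < a' \<and> \<phi> a' < \<phi> a + D}) + N / D + 1"
proof -
  define P where "P = {(a, a'). a \<in> R \<and> a' \<in> R \<and> a < a' \<and> \<phi> a' < \<phi> a + D}"
  define L where "L = {a \<in> R. \<forall>a'\<in>R. a < a' \<longrightarrow> \<phi> a + D \<le> \<phi> a'}"
  have "finite P" using \<open>finite R\<close> by (intro finite_subset[of P "R \<times> R"]) (auto simp: P_def)
  moreover have "R - L \<subseteq> fst ` P" unfolding L_def P_def by force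
  ultimately have card_R_L: "card (R - L) \<le> card P"
    by (meson card_image_le card_mono finite_imageI le_trans)
  \<comment> \<open>Elements without a close successor lie in distinct intervals of length \<open>D\<close>.\<close>
  have "L \<subseteq> R" unfolding L_def by auto
  have "strict_mono_on L (\<lambda>a. \<lfloor>\<phi> a / D\<rfloor>)"
  proof (rule strict_mono_onI)
    fix a b assume "a \<in> L" "b \<in> L" "a < b"
    hence "\<phi> a + D \<le> \<phi> b" unfolding L_def by auto
    hence "(\<phi> a + D) / D \<le> \<phi> b / D" using \<open>0 < D\<close> by (simp add: divide_right_mono)
    hence "\<phi> a / D + 1 \<le> \<phi> b / D" using \<open>0 < D\<close> by (simp add: add_divide_distrib)
    hence "\<lfloor>\<phi> a / D\<rfloor> + 1 \<le> \<lfloor>\<phi> b / D\<rfloor>" by (metis floor_add_int floor_mono of_int_1)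
    thus "\<lfloor>\<phi> a / D\<rfloor> < \<lfloor>\<phi> b / D\<rfloor>" by simp
  qed
  moreover have "(\<lambda>a. \<lfloor>\<phi> a / D\<rfloor>) ` L \<subseteq> {0..\<lfloor>N / D\<rfloor>}"
  proof
    fix k assume "k \<in> (\<lambda>a. \<lfloor>\<phi> a / D\<rfloor>) ` L"
    then obtain a where "a \<in> R" "k = \<lfloor>\<phi> a / D\<rfloor>" unfolding L_def by auto
    moreover have "0 \<le> \<phi> a / D" "\<phi> a / D \<le> N / D"
      using range \<open>a \<in> R\<close> \<open>0 < D\<close> by (auto intro!: divide_right_mono)
    ultimately show "k \<in> {0..\<lfloor>N / D\<rfloor>}" by (auto intro: floor_mono)
  qed
  ultimately have "card L \<le> card {0..\<lfloor>N / D\<rfloor>}"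
    by (intro card_inj_on_le[OF strict_mono_on_imp_inj_on]) auto
  hence "card L \<le> nat (\<lfloor>N / D\<rfloor> + 1)" by simp
  moreover have "real (nat (\<lfloor>N / D\<rfloor> + 1)) \<le> N / D + 1" using \<open>0 < D\<close> \<open>0 \<le> N\<close> by simp
  moreover have "card R = card (R - L) + card L"
  proof -
    have "finite L" using \<open>L \<subseteq> R\<close> \<open>finite R\<close> by (rule finite_subset)
    thus ?thesis using card_Diff_subset[of L R] card_mono[of R L] \<open>L \<subseteq> R\<close> \<open>finite R\<close> by simp
  qed
  ultimately show ?thesis using card_R_L unfolding P_def by linarith
qed

lemma card_convex_quadruples_le:
  assumes sc: "strictly_convex f" and "finite U" "finite V" and U: "\<forall>(s, s')\<in>U. s < s'"
    and Q: "Q \<subseteq> {(x, b, a, a'). (a + b, a' + b) \<in> U \<and> (x - f a', x - f a) \<in> V}"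
  shows "card Q \<le> card U * card V"
proof -
  define h where "h = (\<lambda>(x::real, b::real, a::real, a'::real). ((a + b, a' + b), (x - f a', x - f a)))"
  have "inj_on h Q"
  proof (rule inj_onI)
    fix q1 q2 assume "q1 \<in> Q" "q2 \<in> Q" "h q1 = h q2"
    moreover obtain x1 b1 a1 a1' where q1: "q1 = (x1, b1, a1, a1')" by (cases q1) auto
    moreover obtain x2 b2 a2 a2' where q2: "q2 = (x2, b2, a2, a2')" by (cases q2) auto
    ultimately have "(a1 + b1, a1' + b1) \<in> U" and sums: "a1 + b1 = a2 + b2" "a1' + b1 = a2' + b2"
      and diffs: "x1 - f a1' = x2 - f a2'" "x1 - f a1 = x2 - f a2"
      using Q U unfolding h_def by auto
    hence "a1 < a1'" using U by auto
    moreover have "f a1' - f a1 = f a2' - f a2" using diffs by linarith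
    ultimately have "b1 = b2" using strictly_convex_translate_eq[OF sc] sums by blast
    thus "q1 = q2" using sums diffs unfolding q1 q2 by auto
  qed
  moreover have "h ` Q \<subseteq> U \<times> V" using Q unfolding h_def by auto
  ultimately have "card Q \<le> card (U \<times> V)"
    using assms(2,3) by (intro card_inj_on_le) auto
  thus ?thesis by (simp add: card_cartesian_product)
qed

definition rank_close_pairs ::
    "real set \<Rightarrow> real set \<Rightarrow> real \<Rightarrow> (real \<Rightarrow> real) \<Rightarrow> real \<Rightarrow> real \<Rightarrow> real set \<Rightarrow> (real \<times> real) set"
  where "rank_close_pairs S C \<delta> f x b R = {(a, a'). a \<in> R \<and> a' \<in> R \<and>
    rank_close S (\<delta> * real (card S)) (a + b) (a' + b) \<and> rank_close C (\<delta> * real (card C)) (x - f a') (x - f a)}"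

lemma card_le_rank_close_pairs:
  fixes f :: "real \<Rightarrow> real" and \<delta> :: real
  assumes "finite R" "finite S" "finite C" and mono: "strict_mono_on R f"
    and RS: "\<forall>a\<in>R. a + b \<in> S" and RC: "\<forall>a\<in>R. x - f a \<in> C" and "0 < \<delta>"
  shows "real (card R) \<le> real (card (rank_close_pairs S C \<delta> f x b R)) + 2 / \<delta> + 1"
proof (cases "R = {}")
  case True
  thus ?thesis using \<open>0 < \<delta>\<close> by simp
next
  case False
  define m where "m = real (card S)"
  define n where "n = real (card C)"
  have "m > 0" "n > 0"
    using False RS RC \<open>finite S\<close> \<open>finite C\<close> unfolding m_def n_def by (auto simp: card_gt_0_iff)
  define rS where "rS a = real (rank S (a + b))" for a
  define rC where "rC a = real (rank C (x - f a))" for a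
  define \<phi> where "\<phi> a = rS a / m + (1 - rC a / n)" for a
  have range: "\<phi> ` R \<subseteq> {0..<2}"
  proof
    fix y assume "y \<in> \<phi> ` R"
    then obtain a where a: "a \<in> R" and y: "y = \<phi> a" by auto
    have "rS a < m" "rC a < n"
      using rank_less_card[OF \<open>finite S\<close>, of "a + b"] rank_less_card[OF \<open>finite C\<close>, of "x - f a"] RS RC a
      unfolding rS_def rC_def m_def n_def by auto
    hence "rS a / m < 1" "rC a / n < 1" using \<open>m > 0\<close> \<open>n > 0\<close> by simp_all
    moreover have "0 \<le> rS a / m" "0 \<le> rC a / n"
      using \<open>m > 0\<close> \<open>n > 0\<close> unfolding rS_def rC_def by simp_all
    ultimately show "y \<in> {0..<2}" unfolding y \<phi>_def by simp
  qed
  have pigeonhole: "real (card R) \<le> real (card {(a, a'). a \<in> R \<and> a' \<in> R \<and> a < a' \<and> \<phi> a' < \<phi> a + \<delta>}) + 2 / \<delta> + 1"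
    using card_le_card_close_pairs[OF \<open>finite R\<close> range \<open>0 < \<delta>\<close>] by simp
  \<comment> \<open>Both rank increments of a close pair are positive, so each is smaller than their sum.\<close>
  have rank_close_both: "rank_close S (\<delta> * real (card S)) (a + b) (a' + b) \<and>
      rank_close C (\<delta> * real (card C)) (x - f a') (x - f a)"
    if a: "a \<in> R" and a': "a' \<in> R" and "a < a'" and close: "\<phi> a' < \<phi> a + \<delta>" for a a'
  proof -
    have "x - f a' < x - f a" using strict_mono_onD[OF mono a a' \<open>a < a'\<close>] by simp
    hence "rC a' < rC a" unfolding rC_def using rank_less[OF \<open>finite C\<close>] RC a' by simp
    moreover have "rS a < rS a'" unfolding rS_def using rank_less[OF \<open>finite S\<close>] RS a \<open>a < a'\<close> by simp
    moreover have "(rS a' - rS a) / m + (rC a - rC a') / n < \<delta>"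
      using close unfolding \<phi>_def by (simp add: diff_divide_distrib)
    moreover have "0 < (rS a' - rS a) / m" "0 < (rC a - rC a') / n"
      using calculation(1,2) \<open>m > 0\<close> \<open>n > 0\<close> by simp_all
    ultimately have "(rS a' - rS a) / m < \<delta>" "(rC a - rC a') / n < \<delta>" by linarith+
    hence "rS a' < rS a + \<delta> * m" "rC a < rC a' + \<delta> * n"
      using \<open>m > 0\<close> \<open>n > 0\<close> by (simp_all add: divide_less_eq algebra_simps)
    thus ?thesis
      using a a' RS RC \<open>a < a'\<close> \<open>x - f a' < x - f a\<close>
      unfolding rank_close_def rS_def rC_def m_def n_def by auto
  qed
  have "card {(a, a'). a \<in> R \<and> a' \<in> R \<and> a < a' \<and> \<phi> a' < \<phi> a + \<delta>}
      \<le> card (rank_close_pairs S C \<delta> f x b R)"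
  proof (rule card_mono)
    show "finite (rank_close_pairs S C \<delta> f x b R)" unfolding rank_close_pairs_def
      by (rule finite_subset[of _ "R \<times> R"]) (use \<open>finite R\<close> in auto)
  qed (use rank_close_both in \<open>auto simp: rank_close_pairs_def\<close>)
  with pigeonhole show ?thesis by linarith
qed

lemma many_rank_close_pairs:
  fixes f :: "real \<Rightarrow> real" and \<tau> :: real
  assumes "finite A" "finite B" "finite C" and mono: "strict_mono_on A f" and "4 \<le> \<tau>"
    and "x \<in> popular (f ` A) C \<tau>" and "b \<in> B"
  shows "\<tau> / 2 \<le> real (card (rank_close_pairs (sumset A B) C (8 / \<tau>) f x b {a \<in> A. x - f a \<in> C}))"
proof -
  have "\<tau> \<le> real (card {a \<in> A. x - f a \<in> C})"
    using \<open>x \<in> popular (f ` A) C \<tau>\<close> rep_eq_card_fibre[OF strict_mono_on_imp_inj_on[OF mono]]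
    unfolding popular_def by simp
  moreover have "real (card {a \<in> A. x - f a \<in> C})
      \<le> real (card (rank_close_pairs (sumset A B) C (8 / \<tau>) f x b {a \<in> A. x - f a \<in> C})) + 2 / (8 / \<tau>) + 1"
    by (rule card_le_rank_close_pairs)
      (use assms finite_sumset[OF assms(1,2)] in \<open>auto simp: sumset_def intro: monotone_on_subset[OF mono]\<close>)
  ultimately show ?thesis using \<open>4 \<le> \<tau>\<close> by simp
qed

lemma card_popular_le_strict_mono:
  fixes A B C :: "real set" and f :: "real \<Rightarrow> real" and \<tau> :: real
  assumes "finite A" "finite B" "finite C" and sc: "strictly_convex f" and mono: "strict_mono_on A f"
    and "4 \<le> \<tau>"
  shows "real (card (popular (f ` A) C \<tau>)) * card B * \<tau> ^ 3
    \<le> 128 * real (card (sumset A B)) ^ 2 * real (card C) ^ 2"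
proof -
  define S where "S = sumset A B"
  define E where "E = popular (f ` A) C \<tau>"
  define \<delta> :: real where "\<delta> = 8 / \<tau>"
  define U where "U = {(s, s'). rank_close S (\<delta> * card S) s s'}"
  define V where "V = {(c, c'). rank_close C (\<delta> * card C) c c'}"
  define P where "P x b = rank_close_pairs S C \<delta> f x b {a \<in> A. x - f a \<in> C}" for x b
  have "finite S" unfolding S_def using assms by (simp add: finite_sumset)
  have "finite E" unfolding E_def popular_def using assms by (simp add: finite_sumset)
  have "\<delta> > 0" unfolding \<delta>_def using \<open>4 \<le> \<tau>\<close> by simp
  have finite_P: "finite (P x b)" for x b
    by (rule finite_subset[of _ "A \<times> A"]) (auto simp: P_def rank_close_pairs_def \<open>finite A\<close>)
  have many_pairs: "\<tau> / 2 \<le> real (card (P x b))" if "x \<in> E" "b \<in> B" for x b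
    using many_rank_close_pairs[OF assms(1-3) mono \<open>4 \<le> \<tau>\<close>] that
    unfolding P_def E_def S_def \<delta>_def by blast
  have card_quadruples: "card (SIGMA x:E. SIGMA b:B. P x b) \<le> card U * card V"
  proof (rule card_convex_quadruples_le[OF sc])
    show "finite U" unfolding U_def
      by (rule finite_subset[of _ "S \<times> S"]) (auto simp: rank_close_def \<open>finite S\<close>)
    show "finite V" unfolding V_def
      by (rule finite_subset[of _ "C \<times> C"]) (auto simp: rank_close_def \<open>finite C\<close>)
  qed (auto simp: U_def V_def P_def rank_close_pairs_def rank_close_def)
  have "real (card E) * card B * (\<tau> / 2) = (\<Sum>x\<in>E. \<Sum>b\<in>B. \<tau> / 2)" by simp
  also have "\<dots> \<le> (\<Sum>x\<in>E. \<Sum>b\<in>B. real (card (P x b)))"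
    using many_pairs by (intro sum_mono) auto
  also have "\<dots> = card (SIGMA x:E. SIGMA b:B. P x b)"
    using \<open>finite E\<close> \<open>finite B\<close> finite_P by (simp add: finite_SigmaI)
  also have "\<dots> \<le> real (card U) * real (card V)"
    using card_quadruples by (metis of_nat_le_iff of_nat_mult)
  also have "\<dots> \<le> (card S * (\<delta> * card S)) * (card C * (\<delta> * card C))"
    using card_rank_close_pairs_le[OF \<open>finite S\<close>] card_rank_close_pairs_le[OF \<open>finite C\<close>] \<open>\<delta> > 0\<close>
    unfolding U_def V_def by (intro mult_mono) auto
  also have "\<dots> = 64 * card S ^ 2 * card C ^ 2 / \<tau> ^ 2"
    unfolding \<delta>_def by (simp add: field_simps power2_eq_square)
  finally have "real (card E) * card B * (\<tau> / 2) * (2 * \<tau> ^ 2) \<le> 128 * card S ^ 2 * card C ^ 2"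
    using \<open>4 \<le> \<tau>\<close> by (simp add: field_simps)
  thus ?thesis unfolding E_def S_def by (simp add: power2_eq_square power3_eq_cube algebra_simps)
qed

lemma card_popular_le_strict_antimono:
  fixes A B C :: "real set" and f :: "real \<Rightarrow> real" and \<tau> :: real
  assumes "finite A" "finite B" "finite C" and sc: "strictly_convex f"
    and anti: "strict_antimono_on A f" and "4 \<le> \<tau>"
  shows "real (card (popular (f ` A) C \<tau>)) * card B * \<tau> ^ 3
    \<le> 128 * real (card (sumset A B)) ^ 2 * real (card C) ^ 2"
proof -
  define g where "g t = f (- t)" for t
  have image: "f ` A = g ` uminus ` A" unfolding g_def by (simp add: image_image)
  have "strictly_convex g" unfolding g_def by (rule strictly_convex_reflect[OF sc])
  moreover have "strict_mono_on (uminus ` A) g"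
    using anti unfolding g_def by (auto intro!: strict_mono_onI dest: monotone_onD)
  ultimately have "real (card (popular (g ` uminus ` A) C \<tau>)) * card (uminus ` B) * \<tau> ^ 3
      \<le> 128 * real (card (sumset (uminus ` A) (uminus ` B))) ^ 2 * real (card C) ^ 2"
    using assms by (intro card_popular_le_strict_mono) auto
  thus ?thesis unfolding image sumset_uminus by (simp add: card_image)
qed

lemma card_mult_le_card_sumset_power2:
  assumes "finite A" "finite B"
  shows "card A * card B \<le> card (sumset A B) ^ 2"
proof (cases "A = {} \<or> B = {}")
  case False
  then obtain a b where "a \<in> A" "b \<in> B" by auto
  have "card A \<le> card (sumset B A)" by (rule card_le_card_sumset) (use assms \<open>b \<in> B\<close> in auto)
  moreover have "sumset B A = sumset A B" unfolding sumset_def using add.commute by blast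
  moreover have "card B \<le> card (sumset A B)" by (rule card_le_card_sumset) (use assms \<open>a \<in> A\<close> in auto)
  ultimately show ?thesis by (simp add: mult_le_mono power2_eq_square)
qed auto

lemma card_popular_mult_card_le:
  fixes A B C :: "real set" and f :: "real \<Rightarrow> real"
  assumes "finite A" "finite B" "finite C"
  shows "card (popular (f ` A) C \<tau>) * card B \<le> card (sumset A B) ^ 2 * card C ^ 2"
proof -
  have "card (popular (f ` A) C \<tau>) \<le> card (f ` A) * card C"
    using assms by (simp add: card_popular_le_card_mult)
  also have "\<dots> \<le> card A * card C"
    using card_image_le[OF \<open>finite A\<close>, of f] by (rule mult_le_mono1)
  finally have "card (popular (f ` A) C \<tau>) * card B \<le> (card A * card B) * card C" by simp
  also have "\<dots> \<le> card (sumset A B) ^ 2 * card C"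
    using card_mult_le_card_sumset_power2[OF assms(1,2)] by (rule mult_le_mono1)
  also have "\<dots> \<le> card (sumset A B) ^ 2 * card C ^ 2"
    by (simp add: power2_eq_square le_square)
  finally show ?thesis .
qed

lemma card_popular_le:
  fixes A B C :: "real set" and f :: "real \<Rightarrow> real" and \<tau> :: real
  assumes "finite A" "finite B" "finite C" and sc: "strictly_convex f" and "0 < \<tau>"
  shows "real (card (popular (f ` A) C \<tau>)) * card B * \<tau> ^ 3
    \<le> 2048 * real (card (sumset A B)) ^ 2 * real (card C) ^ 2"
proof (cases "\<tau> < 8")
  case True
  have "real (card (popular (f ` A) C \<tau>)) * card B \<le> real (card (sumset A B)) ^ 2 * real (card C) ^ 2"
    using card_popular_mult_card_le[OF assms(1-3), of f \<tau>] by (metis of_nat_le_iff of_nat_mult of_nat_power)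
  moreover have "\<tau> ^ 3 \<le> 2048" using True \<open>0 < \<tau>\<close> power_mono[of \<tau> 8 3] by simp
  ultimately have "real (card (popular (f ` A) C \<tau>)) * card B * \<tau> ^ 3
      \<le> (real (card (sumset A B)) ^ 2 * real (card C) ^ 2) * 2048"
    by (rule mult_mono) (use \<open>0 < \<tau>\<close> in auto)
  thus ?thesis by (simp add: mult.commute)
next
  case False
  define A1 where "A1 = {a \<in> A. \<forall>y>a. f a < f y}"
  define E where "E X = popular (f ` X) C (\<tau> / 2)" for X
  have card_split: "card (popular (f ` A) C \<tau>) \<le> card (E A1) + card (E (A - A1))"
  proof -
    have "f ` A = f ` A1 \<union> f ` (A - A1)" unfolding A1_def by auto
    hence "popular (f ` A) C \<tau> \<subseteq> E A1 \<union> E (A - A1)"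
      unfolding E_def using popular_Un_subset \<open>0 < \<tau>\<close> by metis
    moreover have "finite (E X)" if "finite X" for X
      unfolding E_def popular_def using that \<open>finite C\<close> by (simp add: finite_sumset)
    ultimately have "card (popular (f ` A) C \<tau>) \<le> card (E A1 \<union> E (A - A1))"
      using \<open>finite A\<close> by (intro card_mono) (auto simp: A1_def)
    thus ?thesis using card_Un_le le_trans by blast
  qed
  have bound: "real (card (E X)) * card B * (\<tau> / 2) ^ 3 \<le> 128 * real (card (sumset A B)) ^ 2 * real (card C) ^ 2"
    if "X \<subseteq> A" and "strict_mono_on X f \<or> strict_antimono_on X f" for X
  proof -
    have "finite X" using that(1) \<open>finite A\<close> by (rule finite_subset)
    hence "real (card (E X)) * card B * (\<tau> / 2) ^ 3 \<le> 128 * real (card (sumset X B)) ^ 2 * real (card C) ^ 2"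
      using that(2) card_popular_le_strict_mono card_popular_le_strict_antimono assms False
      unfolding E_def by auto
    also have "\<dots> \<le> 128 * real (card (sumset A B)) ^ 2 * real (card C) ^ 2"
      using card_mono[OF finite_sumset sumset_mono[OF that(1)]] assms
      by (intro mult_right_mono mult_left_mono power_mono) auto
    finally show ?thesis .
  qed
  have "strict_mono_on A1 f" "strict_antimono_on (A - A1) f"
    using strictly_convex_split_monotone[OF sc, of A] unfolding A1_def by auto
  hence parts: "real (card (E A1)) * card B * (\<tau> / 2) ^ 3 + real (card (E (A - A1))) * card B * (\<tau> / 2) ^ 3
      \<le> 256 * real (card (sumset A B)) ^ 2 * real (card C) ^ 2"
    using bound[of A1] bound[of "A - A1"] unfolding A1_def by fastforce
  have "real (card (popular (f ` A) C \<tau>)) * card B * \<tau> ^ 3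
      \<le> (real (card (E A1)) + real (card (E (A - A1)))) * card B * \<tau> ^ 3"
    using card_split \<open>0 < \<tau>\<close> by (intro mult_right_mono) auto
  also have "\<dots> = 8 * (real (card (E A1)) * card B * (\<tau> / 2) ^ 3 + real (card (E (A - A1))) * card B * (\<tau> / 2) ^ 3)"
    by (simp add: power_divide algebra_simps)
  also have "\<dots> \<le> 8 * (256 * real (card (sumset A B)) ^ 2 * real (card C) ^ 2)"
    using parts by (rule mult_left_mono) simp
  finally show ?thesis by simp
qed

lemma power2_le_power2_mul_log:
  fixes M :: real
  assumes "1 \<le> M"
  shows "M ^ 2 \<le> (M * log 2 (2 * M)) ^ 2"
proof -
  have "1 \<le> log 2 (2 * M)" using assms by simp
  hence "M \<le> M * log 2 (2 * M)" using assms by (simp add: mult_le_cancel_left1)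
  thus ?thesis using assms by (intro power_mono) auto
qed

theorem lemma27:
  shows "\<exists>c::real. c > 0 \<and>
    (\<forall>(A::real set) (B::real set) (C::real set) (f::real \<Rightarrow> real) (M::real) (\<tau>::real).
       finite A \<and> A \<noteq> {} \<and> finite B \<and> B \<noteq> {} \<and> finite C \<and> C \<noteq> {} \<and>
       strictly_convex f \<and> real (card (sumset A B)) \<le> M * real (card B) \<and> \<tau> > 0
       \<longrightarrow> real (card {x \<in> sumset (f ` A) C. real (rep (f ` A) C x) \<ge> \<tau>})
             \<le> c * (M * log 2 (2 * M))\<^sup>2 * real (card B) * real (card C)^2 / \<tau>^3)"
proof (intro exI[of _ 2048] conjI allI impI)
  fix A B C :: "real set" and f :: "real \<Rightarrow> real" and M \<tau> :: real
  assume "finite A \<and> A \<noteq> {} \<and> finite B \<and> B \<noteq> {} \<and> finite C \<and> C \<noteq> {} \<and>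
       strictly_convex f \<and> real (card (sumset A B)) \<le> M * real (card B) \<and> \<tau> > 0"
  hence A: "finite A" "A \<noteq> {}" and B: "finite B" "B \<noteq> {}" and "finite C"
    and sc: "strictly_convex f" and doubling: "real (card (sumset A B)) \<le> M * real (card B)"
    and "\<tau> > 0" by auto
  let ?E = "popular (f ` A) C \<tau>"
  have "card B > 0" using B by (simp add: card_gt_0_iff)
  have "card B \<le> card (sumset A B)" using A B by (metis card_le_card_sumset ex_in_conv)
  hence "real (card B) \<le> M * real (card B)" using doubling by linarith
  hence "1 \<le> M" using \<open>card B > 0\<close> by simp
  have "real (card ?E) * card B * \<tau> ^ 3 \<le> 2048 * real (card (sumset A B)) ^ 2 * real (card C) ^ 2"
    by (rule card_popular_le) fact+
  also have "\<dots> \<le> 2048 * (M * card B) ^ 2 * real (card C) ^ 2"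
    using doubling by (intro mult_right_mono mult_left_mono power_mono) auto
  also have "\<dots> = 2048 * M ^ 2 * (real (card B) ^ 2 * real (card C) ^ 2)"
    by (simp add: power_mult_distrib)
  also have "\<dots> \<le> 2048 * (M * log 2 (2 * M))\<^sup>2 * (real (card B) ^ 2 * real (card C) ^ 2)"
    using power2_le_power2_mul_log[OF \<open>1 \<le> M\<close>] by (intro mult_right_mono mult_left_mono) auto
  also have "\<dots> = (2048 * (M * log 2 (2 * M))\<^sup>2 * card B * real (card C) ^ 2) * card B"
    by (simp add: power2_eq_square)
  finally have "real (card ?E) * \<tau> ^ 3 \<le> 2048 * (M * log 2 (2 * M))\<^sup>2 * card B * real (card C) ^ 2"
    using \<open>card B > 0\<close> by (simp add: algebra_simps)
  thus "real (card {x \<in> sumset (f ` A) C. real (rep (f ` A) C x) \<ge> \<tau>})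
      \<le> 2048 * (M * log 2 (2 * M))\<^sup>2 * real (card B) * real (card C)^2 / \<tau>^3"
    using \<open>\<tau> > 0\<close> unfolding popular_def by (simp add: pos_le_divide_eq)
qed simp

end
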